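(* Let $\{\cdot,\cdot\}$ be a non-degenerate partially decoupled hydrodynamic Poisson bracket in the variables $(\rho,u,w_1,\dots,w_{N-2})$, and let $\boldsymbol\nu=\boldsymbol\nu(\mathbf w)$ be local coordinates in which the microscopic bracket takes the form $\int\partial_xF_k\,g_{kl}\,G_l\,\mathrm dx$ with $g$ a constant symmetric invertible matrix. Then the $N-2$ functionals $$C_k[\rho,\boldsymbol\nu]=\int\rho\,\nu_k\,\mathrm dx,\qquad k=1,\dots,N-2,$$ together with $$C[\rho]=\int\rho\,\mathrm dx,\qquad C[\rho,u,\boldsymbol\nu]=\int\Big(u-\frac{\rho}{2}\boldsymbol\nu\cdot g^{-1}\boldsymbol\nu\Big)\mathrm dx,$$ are Casimir invariants of the bracket, i.e. $\{C,F\}=0$ for every functional $F$.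
   Context: Fields vanish at infinity with all derivatives. A partially decoupled hydrodynamic bracket in $(\rho,u,w_1,\dots,w_{N-2})$ is $$\{F,G\}=\int\Big(\partial_xF_uG_\rho-F_\rho\partial_xG_u+\partial_xw_k\Big(F_u\frac{G_k}{\rho}-\frac{F_k}{\rho}G_u\Big)+\partial_x\Big(\frac{F_k}{\rho}\Big)\alpha_{kl}(\mathbf w)\frac{G_l}{\rho}+\frac{F_k}{\rho}\beta_{kl}(\mathbf w,\partial_x\mathbf w)\frac{G_l}{\rho}\Big)\mathrm dx,$$ with $F_u,F_\rho,F_k=\delta F/\delta w_k$ functional derivatives, sums over $k,l=1,\dots,N-2$, $\alpha(\mathbf w)$ symmetric depending only on $\mathbf w$, $\beta$ linear in $\partial_x\mathbf w$, $\partial_x\alpha=\beta+\beta^t$. Its microscopic bracket is $\{F,G\}_{\rm m}=\int(\partial_xF_k\alpha_{kl}(\mathbf w)G_l+F_k\beta_{kl}(\mathbf w,\partial_x\mathbf w)G_l)\mathrm dx$ on functionals of $\mathbf w$. Non-degenerate means the full coefficient matrix of $\partial_x F\cdot G$ is invertible; Poisson means the Jacobi identity holds. *)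

theory Defs
  imports "HOL-Analysis.Analysis"
begin

definition smooth_fun :: "(real \<Rightarrow> real) \<Rightarrow> bool" where
  "smooth_fun f \<longleftrightarrow> (\<forall>m x. ((deriv ^^ m) f) differentiable (at x))"

definition C1_fun :: "(real \<Rightarrow> real) \<Rightarrow> bool" where
  "C1_fun f \<longleftrightarrow> (\<forall>x. f differentiable (at x)) \<and> continuous_on UNIV (deriv f)"

definition decays :: "(real \<Rightarrow> real) \<Rightarrow> bool" where
  "decays f \<longleftrightarrow> (f \<longlongrightarrow> 0) at_infinity"

text \<open>Admissible field: smooth, vanishing at infinity with all derivatives,
  and (absolutely) integrable, so that functionals like \<open>\<integral>\<rho> dx\<close> are defined.\<close>
definition field :: "(real \<Rightarrow> real) \<Rightarrow> bool" where
  "field f \<longleftrightarrow> smooth_fun f \<and> (\<forall>m. decays ((deriv ^^ m) f))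
      \<and> f absolutely_integrable_on UNIV"

definition test_fun :: "(real \<Rightarrow> real) \<Rightarrow> bool" where
  "test_fun \<phi> \<longleftrightarrow> smooth_fun \<phi> \<and> bounded {x. \<phi> x \<noteq> 0}"

definition dx_vec :: "(real \<Rightarrow> real^'n) \<Rightarrow> real \<Rightarrow> real^'n" where
  "dx_vec w x = (\<chi> k. deriv (\<lambda>y. w y $ k) x)"

text \<open>Admissible states \<open>(\<rho>,u,\<w>)\<close>: fields, \<open>\<rho>\<close> nowhere zero (the bracket divides by
  \<open>\<rho>\<close>), and \<open>\<w>\<close> taking values in the coordinate domain \<open>U\<close>.\<close>
definition admissible_state ::
  "(real^'n) set \<Rightarrow> (real \<Rightarrow> real) \<Rightarrow> (real \<Rightarrow> real) \<Rightarrow> (real \<Rightarrow> real^'n) \<Rightarrow> bool" where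
  "admissible_state U \<rho> u w \<longleftrightarrow> field \<rho> \<and> field u \<and> (\<forall>k. field (\<lambda>x. w x $ k))
      \<and> (\<forall>x. \<rho> x \<noteq> 0) \<and> (\<forall>x. w x \<in> U)"

type_synonym 'n functional = "(real \<Rightarrow> real) \<Rightarrow> (real \<Rightarrow> real) \<Rightarrow> (real \<Rightarrow> real^'n) \<Rightarrow> real"

text \<open>\<open>(F\<rho>, Fu, Fw)\<close> are the functional derivatives \<open>\<delta>F/\<delta>\<rho>, \<delta>F/\<delta>u, \<delta>F/\<delta>w_k\<close> of \<open>F\<close>
  at the state \<open>(\<rho>,u,\<w>)\<close>: continuously differentiable functions representing the
  Gateaux derivative of \<open>F\<close> in every compactly supported smooth direction.\<close>
definition has_fderivs ::
  "'n functional \<Rightarrow> (real \<Rightarrow> real) \<Rightarrow> (real \<Rightarrow> real) \<Rightarrow> (real \<Rightarrow> real^'n)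
   \<Rightarrow> (real \<Rightarrow> real) \<Rightarrow> (real \<Rightarrow> real) \<Rightarrow> (real \<Rightarrow> real^'n) \<Rightarrow> bool" where
  "has_fderivs F \<rho> u w F\<rho> Fu Fw \<longleftrightarrow>
     C1_fun F\<rho> \<and> C1_fun Fu \<and> (\<forall>k. C1_fun (\<lambda>x. Fw x $ k)) \<and>
     (\<forall>\<phi> \<psi> \<eta>. test_fun \<phi> \<and> test_fun \<psi> \<and> (\<forall>k. test_fun (\<lambda>x. \<eta> x $ k)) \<longrightarrow>
        ((\<lambda>\<epsilon>. F (\<lambda>x. \<rho> x + \<epsilon> * \<phi> x) (\<lambda>x. u x + \<epsilon> * \<psi> x) (\<lambda>x. w x + \<epsilon> *\<^sub>R \<eta> x))
          has_real_derivative
          integral UNIV (\<lambda>x. F\<rho> x * \<phi> x + Fu x * \<psi> x + Fw x \<bullet> \<eta> x)) (at 0))"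

definition pd_bracket ::
  "(real^'n \<Rightarrow> real^'n^'n) \<Rightarrow> (real^'n \<Rightarrow> real^'n \<Rightarrow> real^'n^'n)
   \<Rightarrow> (real \<Rightarrow> real) \<Rightarrow> (real \<Rightarrow> real^'n)
   \<Rightarrow> (real \<Rightarrow> real) \<Rightarrow> (real \<Rightarrow> real) \<Rightarrow> (real \<Rightarrow> real^'n)
   \<Rightarrow> (real \<Rightarrow> real) \<Rightarrow> (real \<Rightarrow> real) \<Rightarrow> (real \<Rightarrow> real^'n) \<Rightarrow> real" where
  "pd_bracket \<alpha> \<beta> \<rho> w F\<rho> Fu Fw G\<rho> Gu Gw =
     integral UNIV (\<lambda>x.
         deriv Fu x * G\<rho> x - F\<rho> x * deriv Gu x
       + (\<Sum>k\<in>UNIV. deriv (\<lambda>y. w y $ k) x * (Fu x * (Gw x $ k / \<rho> x) - (Fw x $ k / \<rho> x) * Gu x))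
       + (\<Sum>k\<in>UNIV. \<Sum>l\<in>UNIV. deriv (\<lambda>y. Fw y $ k / \<rho> y) x * (\<alpha> (w x) $ k $ l) * (Gw x $ l / \<rho> x))
       + (\<Sum>k\<in>UNIV. \<Sum>l\<in>UNIV. (Fw x $ k / \<rho> x) * (\<beta> (w x) (dx_vec w x) $ k $ l) * (Gw x $ l / \<rho> x)))"

text \<open>Structural conditions on the coefficients on the domain \<open>U\<close>:
  \<open>\<alpha>\<close> symmetric, \<open>\<beta>\<close> linear in \<open>\<partial>\<^sub>x\<w>\<close>, and \<open>\<partial>\<^sub>x\<alpha> = \<beta> + \<beta>\<^sup>t\<close> (pointwise form: the derivative
  of \<open>\<alpha>\<close> in direction \<open>v\<close> is \<open>\<beta>(\<w>,v) + \<beta>(\<w>,v)\<^sup>t\<close>).\<close>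
definition pd_coefficients ::
  "(real^'n) set \<Rightarrow> (real^'n \<Rightarrow> real^'n^'n) \<Rightarrow> (real^'n \<Rightarrow> real^'n \<Rightarrow> real^'n^'n) \<Rightarrow> bool" where
  "pd_coefficients U \<alpha> \<beta> \<longleftrightarrow>
     (\<forall>w\<in>U. transpose (\<alpha> w) = \<alpha> w) \<and> (\<forall>w\<in>U. linear (\<beta> w)) \<and>
     (\<forall>w\<in>U. (\<alpha> has_derivative (\<lambda>v. \<beta> w v + transpose (\<beta> w v))) (at w))"

text \<open>Non-degeneracy: the coefficient matrix of \<open>\<partial>\<^sub>xF\<cdot>G\<close>, i.e. in the variables \<open>(\<rho>,u,\<w>)\<close>
  the block matrix \<open>[[0,1,0],[1,0,0],[0,0,\<alpha>(\<w>)/\<rho>\<^sup>2]]\<close>, is invertible; given \<open>\<rho> \<noteq> 0\<close>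
  this means \<open>\<alpha>(\<w>)\<close> is invertible.\<close>
definition nondegenerate :: "(real^'n) set \<Rightarrow> (real^'n \<Rightarrow> real^'n^'n) \<Rightarrow> bool" where
  "nondegenerate U \<alpha> \<longleftrightarrow> (\<forall>w\<in>U. invertible (\<alpha> w))"

definition local_coordinates ::
  "(real^'n) set \<Rightarrow> (real^'n \<Rightarrow> real^'n) \<Rightarrow> (real^'n \<Rightarrow> real^'n^'n)
   \<Rightarrow> (real^'n \<Rightarrow> real^'n \<Rightarrow> real^'n^'n) \<Rightarrow> bool" where
  "local_coordinates U \<nu> J DJ \<longleftrightarrow>
     (\<forall>w\<in>U. (\<nu> has_derivative (\<lambda>v. J w *v v)) (at w)) \<and>
     (\<forall>w\<in>U. invertible (J w)) \<and>
     (\<forall>w\<in>U. (J has_derivative DJ w) (at w)) \<and>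
     continuous_on U DJ"

text \<open>In the coordinates \<open>\<nu>\<close> the microscopic bracket \<open>\<integral>(\<partial>\<^sub>xF\<^sub>k \<alpha>\<^sub>k\<^sub>l G\<^sub>l + F\<^sub>k \<beta>\<^sub>k\<^sub>l G\<^sub>l)dx\<close>
  takes the form \<open>\<integral>\<partial>\<^sub>xF\<^sub>k g\<^sub>k\<^sub>l G\<^sub>l dx\<close>. Since \<open>\<delta>F/\<delta>\<w> = J\<^sup>t \<delta>F/\<delta>\<nu>\<close>, this is the
  transformation law \<open>J \<alpha> J\<^sup>t = g\<close> and \<open>(\<partial>\<^sub>xJ) \<alpha> J\<^sup>t + J \<beta> J\<^sup>t = 0\<close>, with
  \<open>\<partial>\<^sub>xJ = DJ(\<w>)[\<partial>\<^sub>x\<w>]\<close>, written pointwise in \<open>(\<w>, \<partial>\<^sub>x\<w>) = (w, v)\<close>.\<close>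
definition flat_microscopic ::
  "(real^'n) set \<Rightarrow> (real^'n \<Rightarrow> real^'n^'n) \<Rightarrow> (real^'n \<Rightarrow> real^'n \<Rightarrow> real^'n^'n)
   \<Rightarrow> (real^'n \<Rightarrow> real^'n^'n) \<Rightarrow> (real^'n \<Rightarrow> real^'n \<Rightarrow> real^'n^'n) \<Rightarrow> real^'n^'n \<Rightarrow> bool" where
  "flat_microscopic U \<alpha> \<beta> J DJ g \<longleftrightarrow>
     (\<forall>w\<in>U. J w ** \<alpha> w ** transpose (J w) = g) \<and>
     (\<forall>w\<in>U. \<forall>v. DJ w v ** \<alpha> w ** transpose (J w) + J w ** \<beta> w v ** transpose (J w) = 0)"

text \<open>Casimir: \<open>{C,F} = 0\<close> for every functional \<open>F\<close>, at every admissible state where the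
  functional derivatives exist (those of \<open>F\<close> vanishing at infinity, as fields do).\<close>
definition is_casimir ::
  "(real^'n) set \<Rightarrow> (real^'n \<Rightarrow> real^'n^'n) \<Rightarrow> (real^'n \<Rightarrow> real^'n \<Rightarrow> real^'n^'n)
   \<Rightarrow> 'n functional \<Rightarrow> bool" where
  "is_casimir U \<alpha> \<beta> C \<longleftrightarrow>
     (\<forall>\<rho> u w. admissible_state U \<rho> u w \<longrightarrow>
       (\<forall>C\<rho> Cu Cw. has_fderivs C \<rho> u w C\<rho> Cu Cw \<longrightarrow>
         (\<forall>F F\<rho> Fu Fw. has_fderivs F \<rho> u w F\<rho> Fu Fw \<and> decays F\<rho> \<and> decays Fu
              \<and> (\<forall>k. decays (\<lambda>x. Fw x $ k)) \<longrightarrow>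
            pd_bracket \<alpha> \<beta> \<rho> w C\<rho> Cu Cw F\<rho> Fu Fw = 0)))"

definition casimir_rho :: "'n functional" where
  "casimir_rho \<rho> u w = integral UNIV \<rho>"

definition casimir_nu :: "(real^'n \<Rightarrow> real^'n) \<Rightarrow> 'n \<Rightarrow> 'n functional" where
  "casimir_nu \<nu> k \<rho> u w = integral UNIV (\<lambda>x. \<rho> x * \<nu> (w x) $ k)"

definition casimir_u :: "(real^'n \<Rightarrow> real^'n) \<Rightarrow> real^'n^'n \<Rightarrow> 'n functional" where
  "casimir_u \<nu> g \<rho> u w =
     integral UNIV (\<lambda>x. u x - \<rho> x / 2 * (\<nu> (w x) \<bullet> (matrix_inv g *v \<nu> (w x))))"

end

theory Submission
  imports Defs
begin

(* Each of the candidate Casimirs is a density functional C = \<integral>(a u + \<rho> \<phi>(w)) dx: take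
   \<phi> = 1 and a = 0, \<phi> = \<nu>_k and a = 0, or \<phi> = -\<nu>\<cdot>g\<^sup>-\<^sup>1\<nu>/2 and a = 1.  Testing against compactly
   supported bump functions (the fundamental lemma of the calculus of variations) pins down its
   functional derivatives as \<phi>(w), a and \<rho> \<nabla>\<phi>(w).  Substituted into the bracket, the integrand
   becomes -(\<phi>(w) F_u)' plus the pairing of F_w/\<rho> with a w' + (\<nabla>\<phi>(w))' \<alpha> + \<nabla>\<phi>(w) \<beta>.  In
   flat coordinates J \<alpha> J\<^sup>t = g and (\<partial>J) \<alpha> + J \<beta> = 0, which makes the second term vanish for all
   three densities, and the total derivative integrates to zero because the fields decay. *)

lemma smooth_fun_iff_deriv:
  "smooth_fun f \<longleftrightarrow> (\<forall>x. f differentiable (at x)) \<and> smooth_fun (deriv f)"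
proof -
  have "(\<forall>m x. (deriv ^^ m) f differentiable (at x)) \<longleftrightarrow>
        (\<forall>x. (deriv ^^ 0) f differentiable (at x)) \<and> (\<forall>m x. (deriv ^^ Suc m) f differentiable (at x))"
    by (metis not0_implies_Suc)
  then show ?thesis
    unfolding smooth_fun_def by (simp add: funpow_Suc_right del: funpow.simps)
qed

lemma smooth_fun_differentiable: "smooth_fun f \<Longrightarrow> f differentiable (at x)"
  and smooth_fun_deriv: "smooth_fun f \<Longrightarrow> smooth_fun (deriv f)"
  using smooth_fun_iff_deriv by blast+

lemma smooth_fun_has_real_derivative:
  "smooth_fun f \<Longrightarrow> (f has_real_derivative deriv f x) (at x)"
  by (meson DERIV_deriv_iff_real_differentiable smooth_fun_differentiable)

lemma smooth_fun_field_differentiable: "smooth_fun f \<Longrightarrow> f field_differentiable (at x)"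
  using DERIV_deriv_iff_field_differentiable smooth_fun_has_real_derivative by blast

lemma smooth_fun_continuous_on: "smooth_fun f \<Longrightarrow> continuous_on A f"
  by (meson continuous_at_imp_continuous_on differentiable_imp_continuous_within smooth_fun_differentiable)

lemma smooth_fun_funpow_deriv: "smooth_fun f \<Longrightarrow> smooth_fun ((deriv ^^ n) f)"
  by (induction n) (auto intro: smooth_fun_deriv)

lemma smooth_fun_const: "smooth_fun (\<lambda>x. c)"
proof -
  have "(deriv ^^ Suc m) (\<lambda>x. c) = (\<lambda>x. 0)" for m
    by (induction m) (auto simp: funpow_Suc_right simp del: funpow.simps)
  then have "(deriv ^^ m) (\<lambda>x. c) differentiable (at x)" for m x
    by (cases m) auto
  then show ?thesis
    unfolding smooth_fun_def by blast
qed

lemma funpow_deriv_add: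
  fixes a b :: "real \<Rightarrow> real"
  assumes "\<And>m x. m < n \<Longrightarrow> (deriv ^^ m) a differentiable (at x)"
    and "\<And>m x. m < n \<Longrightarrow> (deriv ^^ m) b differentiable (at x)"
  shows "(deriv ^^ n) (\<lambda>x. a x + b x) = (\<lambda>x. (deriv ^^ n) a x + (deriv ^^ n) b x)"
  using assms
proof (induction n arbitrary: a b)
  case 0
  then show ?case by simp
next
  case (Suc n)
  have "deriv (\<lambda>x. a x + b x) = (\<lambda>x. deriv a x + deriv b x)"
    using Suc.prems[of 0]
    by (intro ext deriv_add)
      (auto simp: DERIV_deriv_iff_field_differentiable[symmetric] DERIV_deriv_iff_real_differentiable)
  moreover have "(deriv ^^ n) (\<lambda>x. deriv a x + deriv b x)
      = (\<lambda>x. (deriv ^^ n) (deriv a) x + (deriv ^^ n) (deriv b) x)"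
    using Suc.prems[of "Suc _"] by (intro Suc.IH) (auto simp: funpow_swap1)
  ultimately show ?case
    by (simp add: funpow_Suc_right del: funpow.simps)
qed

lemma smooth_fun_mult:
  assumes "smooth_fun f" and "smooth_fun g"
  shows "smooth_fun (\<lambda>x. f x * g x)"
proof -
  have "\<forall>f g. smooth_fun f \<longrightarrow> smooth_fun g \<longrightarrow>
          (\<forall>m\<le>n. \<forall>x. (deriv ^^ m) (\<lambda>x. f x * g x) differentiable (at x))" for n
  proof (induction n)
    case 0
    then show ?case
      by (simp add: differentiable_mult smooth_fun_differentiable)
  next
    case (Suc n)
    show ?case
    proof (intro allI impI)
      fix f g m x
      assume f: "smooth_fun f" and g: "smooth_fun g" and m: "m \<le> Suc n"
      show "(deriv ^^ m) (\<lambda>x. f x * g x) differentiable (at x)"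
      proof (cases m)
        case 0
        then show ?thesis
          using f g by (simp add: differentiable_mult smooth_fun_differentiable)
      next
        case (Suc k)
        have "deriv (\<lambda>x. f x * g x) = (\<lambda>x. deriv f x * g x + f x * deriv g x)"
          using f g by (auto simp: smooth_fun_field_differentiable)
        then have "(deriv ^^ m) (\<lambda>x. f x * g x)
            = (deriv ^^ k) (\<lambda>x. deriv f x * g x + f x * deriv g x)"
          using Suc by (simp add: funpow_Suc_right del: funpow.simps)
        moreover have
          "\<forall>j\<le>n. \<forall>x. (deriv ^^ j) (\<lambda>x. deriv f x * g x) differentiable (at x)" and
          "\<forall>j\<le>n. \<forall>x. (deriv ^^ j) (\<lambda>x. f x * deriv g x) differentiable (at x)"
          using Suc.IH f g smooth_fun_deriv by blast+
        ultimately show ?thesis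
          using Suc m by (simp add: funpow_deriv_add differentiable_add)
      qed
    qed
  qed
  with assms show ?thesis
    unfolding smooth_fun_def by blast
qed

lemma smooth_fun_compose_affine:
  assumes "smooth_fun f"
  shows "smooth_fun (\<lambda>x. f (a + c * x))"
proof -
  have affine: "((\<lambda>x. a + c * x) has_real_derivative c) (at x)" for x
    by (auto intro!: derivative_eq_intros)
  have chain: "((\<lambda>x. (deriv ^^ n) f (a + c * x)) has_real_derivative
                  (deriv ^^ Suc n) f (a + c * x) * c) (at x)" for n x
    using DERIV_chain2[OF smooth_fun_has_real_derivative[OF smooth_fun_funpow_deriv[OF assms]] affine]
    by simp
  have funpow: "(deriv ^^ n) (\<lambda>x. f (a + c * x)) = (\<lambda>x. c ^ n * (deriv ^^ n) f (a + c * x))" for n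
  proof (induction n)
    case 0
    then show ?case by simp
  next
    case (Suc n)
    then show ?case
      using DERIV_cmult[OF chain, of "c ^ n" n] by (auto intro!: DERIV_imp_deriv simp: algebra_simps)
  qed
  show ?thesis
    unfolding smooth_fun_def funpow
  proof (intro allI)
    fix m x
    have "(\<lambda>x. (deriv ^^ m) f (a + c * x)) differentiable (at x)"
      using chain real_differentiable_def by blast
    then show "(\<lambda>x. c ^ m * (deriv ^^ m) f (a + c * x)) differentiable (at x)"
      by simp
  qed
qed

section \<open>A smooth bump function\<close>

definition exp_neg_inv :: "real \<Rightarrow> real" where
  "exp_neg_inv x = (if x > 0 then exp (- inverse x) else 0)"

text \<open>For \<open>x > 0\<close> the derivative of \<open>P(1/x) exp(-1/x)\<close> is \<open>(1/x)\<^sup>2 (P - P')(1/x) exp(-1/x)\<close>,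
  whence the recursion below for the polynomials in the higher derivatives of \<open>exp_neg_inv\<close>.\<close>

fun exp_neg_inv_poly :: "nat \<Rightarrow> real poly" where
  "exp_neg_inv_poly 0 = 1"
| "exp_neg_inv_poly (Suc n) = [:0, 0, 1:] * (exp_neg_inv_poly n - pderiv (exp_neg_inv_poly n))"

definition exp_neg_inv_deriv :: "nat \<Rightarrow> real \<Rightarrow> real" where
  "exp_neg_inv_deriv n x =
     (if x > 0 then poly (exp_neg_inv_poly n) (inverse x) * exp (- inverse x) else 0)"

lemma tendsto_poly_inverse_exp_neg_inverse:
  fixes q :: "real poly"
  shows "((\<lambda>h. poly q (inverse h) * exp (- inverse h) / h) \<longlongrightarrow> 0) (at_right 0)"
proof -
  have "((\<lambda>t. \<Sum>i\<le>degree p. coeff p i * (t ^ i / exp t)) \<longlongrightarrow> (\<Sum>i\<le>degree p. coeff p i * 0)) at_top"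
    for p :: "real poly"
    by (intro tendsto_sum tendsto_mult tendsto_const tendsto_power_div_exp_0)
  then have "((\<lambda>t. poly p t / exp t) \<longlongrightarrow> 0) at_top" for p :: "real poly"
    by (simp add: poly_altdef sum_divide_distrib)
  from filterlim_compose[OF this[of "[:0, 1:] * q"] filterlim_inverse_at_top_right]
  have "((\<lambda>h. poly ([:0, 1:] * q) (inverse h) / exp (inverse h)) \<longlongrightarrow> 0) (at_right 0)"
    by (simp add: o_def)
  moreover have "poly ([:0, 1:] * q) (inverse h) / exp (inverse h)
      = poly q (inverse h) * exp (- inverse h) / h" for h :: real
    by (simp add: exp_minus field_simps)
  ultimately show ?thesis
    by simp
qed

lemma exp_neg_inv_deriv_has_real_derivative:
  "(exp_neg_inv_deriv n has_real_derivative exp_neg_inv_deriv (Suc n) x) (at x)"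
proof (cases x "0 :: real" rule: linorder_cases)
  case less
  have "((\<lambda>y. 0) has_real_derivative exp_neg_inv_deriv (Suc n) x) (at x)"
    using less by (simp add: exp_neg_inv_deriv_def)
  then show ?thesis
    by (rule has_field_derivative_transform_within_open[where S="{..<0}"])
      (use less in \<open>auto simp: exp_neg_inv_deriv_def\<close>)
next
  case equal
  have "((\<lambda>h. (exp_neg_inv_deriv n h - exp_neg_inv_deriv n 0) / h) \<longlongrightarrow> 0) (at 0)"
  proof (rule filterlim_split_at_real)
    have "\<forall>\<^sub>F h in at_left 0. (exp_neg_inv_deriv n h - exp_neg_inv_deriv n 0) / h = 0"
      using eventually_at_left_real[of "-1" 0]
      by (rule eventually_mono) (auto simp: exp_neg_inv_deriv_def)
    then show "((\<lambda>h. (exp_neg_inv_deriv n h - exp_neg_inv_deriv n 0) / h) \<longlongrightarrow> 0) (at_left 0)"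
      by (rule tendsto_eventually)
    have "\<forall>\<^sub>F h in at_right 0. poly (exp_neg_inv_poly n) (inverse h) * exp (- inverse h) / h
            = (exp_neg_inv_deriv n h - exp_neg_inv_deriv n 0) / h"
      using eventually_at_right_real[of 0 1]
      by (rule eventually_mono) (auto simp: exp_neg_inv_deriv_def)
    then show "((\<lambda>h. (exp_neg_inv_deriv n h - exp_neg_inv_deriv n 0) / h) \<longlongrightarrow> 0) (at_right 0)"
      by (rule Lim_transform_eventually[OF tendsto_poly_inverse_exp_neg_inverse])
  qed
  then show ?thesis
    using equal by (simp add: DERIV_def exp_neg_inv_deriv_def)
next
  case greater
  have "((\<lambda>y. poly (exp_neg_inv_poly n) (inverse y) * exp (- inverse y)) has_real_derivative
       poly (pderiv (exp_neg_inv_poly n)) (inverse x) * (- (inverse x ^ 2)) * exp (- inverse x)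
        + poly (exp_neg_inv_poly n) (inverse x) * (exp (- inverse x) * (inverse x ^ 2))) (at x)"
    using greater
    by (auto intro!: derivative_eq_intros DERIV_chain2[OF poly_DERIV] simp: power2_eq_square)
  then have "((\<lambda>y. poly (exp_neg_inv_poly n) (inverse y) * exp (- inverse y)) has_real_derivative
       exp_neg_inv_deriv (Suc n) x) (at x)"
    using greater by (simp add: exp_neg_inv_deriv_def algebra_simps power2_eq_square)
  then show ?thesis
    by (rule has_field_derivative_transform_within_open[where S="{0<..}"])
      (use greater in \<open>auto simp: exp_neg_inv_deriv_def\<close>)
qed

lemma smooth_fun_exp_neg_inv: "smooth_fun exp_neg_inv"
proof -
  have "(deriv ^^ n) exp_neg_inv = exp_neg_inv_deriv n" for n
  proof (induction n)
    case 0
    then show ?case by (auto simp: exp_neg_inv_def exp_neg_inv_deriv_def)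
  next
    case (Suc n)
    then show ?case
      using exp_neg_inv_deriv_has_real_derivative by (auto intro!: DERIV_imp_deriv)
  qed
  then show ?thesis
    unfolding smooth_fun_def
    using exp_neg_inv_deriv_has_real_derivative real_differentiable_def by metis
qed

definition bump :: "real \<Rightarrow> real \<Rightarrow> real \<Rightarrow> real" where
  "bump x0 d x = exp_neg_inv (x - x0 + d) * exp_neg_inv (x0 + d - x)"

lemma bump_nonneg: "bump x0 d x \<ge> 0"
  by (simp add: bump_def exp_neg_inv_def)

lemma bump_pos_iff: "bump x0 d x > 0 \<longleftrightarrow> \<bar>x - x0\<bar> < d"
  by (auto simp: bump_def exp_neg_inv_def zero_less_mult_iff)

lemma test_fun_bump: "test_fun (bump x0 d)"
  unfolding test_fun_def
proof
  have "bump x0 d = (\<lambda>x. exp_neg_inv ((d - x0) + 1 * x) * exp_neg_inv ((x0 + d) + (-1) * x))"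
    by (auto simp: bump_def fun_eq_iff algebra_simps)
  then show "smooth_fun (bump x0 d)"
    by (simp only: smooth_fun_mult smooth_fun_compose_affine smooth_fun_exp_neg_inv)
  have "{x. bump x0 d x \<noteq> 0} \<subseteq> cball x0 d"
  proof
    fix x
    assume "x \<in> {x. bump x0 d x \<noteq> 0}"
    then have "bump x0 d x > 0"
      using bump_nonneg[of x0 d x] by simp
    then show "x \<in> cball x0 d"
      by (simp add: bump_pos_iff dist_real_def abs_minus_commute)
  qed
  then show "bounded {x. bump x0 d x \<noteq> 0}"
    using bounded_cball bounded_subset by blast
qed

section \<open>The fundamental lemma of the calculus of variations\<close>

lemma test_fun_continuous_on: "test_fun \<phi> \<Longrightarrow> continuous_on S \<phi>"
  unfolding test_fun_def by (auto intro: smooth_fun_continuous_on)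

lemma test_fun_zero: "test_fun (\<lambda>x. 0)"
  unfolding test_fun_def by (simp add: smooth_fun_const)

lemma has_integral_UNIV_if_support_interval:
  fixes f :: "real \<Rightarrow> 'b::euclidean_space"
  assumes "continuous_on {a..b} f" and "\<And>x. x \<notin> {a..b} \<Longrightarrow> f x = 0"
  shows "(f has_integral integral {a..b} f) UNIV"
proof -
  have "(f has_integral integral {a..b} f) {a..b}"
    using integrable_continuous_interval[OF assms(1)] by (rule integrable_integral)
  then have "((\<lambda>x. if x \<in> {a..b} then f x else 0) has_integral integral {a..b} f) UNIV"
    by (simp only: has_integral_restrict_UNIV)
  moreover have "(\<lambda>x. if x \<in> {a..b} then f x else 0) = f"
    using assms(2) by auto
  ultimately show ?thesis
    by simp
qed

lemma exists_test_fun_integral_nonzero: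
  fixes h :: "real \<Rightarrow> real"
  assumes cont: "continuous_on UNIV h" and pos: "h x0 > 0"
  shows "\<exists>\<phi>. test_fun \<phi> \<and> integral UNIV (\<lambda>x. h x * \<phi> x) \<noteq> 0"
proof -
  obtain d where "d > 0" and d: "\<And>x. \<bar>x - x0\<bar> < d \<Longrightarrow> \<bar>h x - h x0\<bar> < h x0"
  proof -
    have "\<exists>d>0. \<forall>x. \<bar>x - x0\<bar> < d \<longrightarrow> \<bar>h x - h x0\<bar> < h x0"
      using cont pos unfolding continuous_on_eq_continuous_at[OF open_UNIV] continuous_at_eps_delta
      by (simp add: dist_real_def)
    then show ?thesis
      using that by blast
  qed
  define f where "f x = h x * bump x0 d x" for x
  have cont_f: "continuous_on S f" for S
    unfolding f_def
    by (intro continuous_on_mult continuous_on_subset[OF cont] test_fun_continuous_on[OF test_fun_bump])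
      auto
  have f_nonneg: "f x \<ge> 0" for x
    using d[of x] pos bump_nonneg[of x0 d x] bump_pos_iff[of x0 d x] by (auto simp: f_def)
  have f_support: "f x = 0" if "x \<notin> {x0 - d..x0 + d}" for x
    using that bump_nonneg[of x0 d x] bump_pos_iff[of x0 d x] by (auto simp: f_def)
  have "integral UNIV f \<noteq> 0"
  proof
    assume "integral UNIV f = 0"
    then have "(f has_integral 0) (cbox (x0 - d) (x0 + d))"
      using has_integral_UNIV_if_support_interval[OF cont_f f_support]
        integrable_continuous_interval[OF cont_f]
      by (metis has_integral_integrable_integral has_integral_unique interval_cbox)
    then have "f x0 = 0"
      using has_integral_0_cbox_imp_0[OF cont_f] f_nonneg \<open>d > 0\<close> by (simp add: cbox_interval)
    then show False
      using pos bump_pos_iff[of x0 d x0] \<open>d > 0\<close> by (simp add: f_def)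
  qed
  then show ?thesis
    using test_fun_bump unfolding f_def by blast
qed

lemma fundamental_lemma_calculus_variations:
  fixes h :: "real \<Rightarrow> real"
  assumes cont: "continuous_on UNIV h"
    and orth: "\<And>\<phi>. test_fun \<phi> \<Longrightarrow> integral UNIV (\<lambda>x. h x * \<phi> x) = 0"
  shows "h x = 0"
proof (rule ccontr)
  assume "h x \<noteq> 0"
  then consider "h x > 0" | "- h x > 0"
    by linarith
  then show False
  proof cases
    case 1
    then show False
      using exists_test_fun_integral_nonzero[OF cont] orth by blast
  next
    case 2
    have "continuous_on UNIV (\<lambda>x. - h x)"
      using cont by (rule continuous_on_minus)
    with 2 obtain \<phi> where "test_fun \<phi>" "integral UNIV (\<lambda>x. - h x * \<phi> x) \<noteq> 0"
      using exists_test_fun_integral_nonzero by blast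
    then show False
      using orth integral_neg[of UNIV "\<lambda>x. h x * \<phi> x"] by simp
  qed
qed

section \<open>Functional derivatives of local functionals\<close>

lemma test_fun_vec_continuous_on:
  "(\<forall>k. test_fun (\<lambda>x. \<eta> x $ k)) \<Longrightarrow> continuous_on S (\<eta> :: real \<Rightarrow> real^'n)"
  using continuous_on_vec_lambda[of S "\<lambda>k x. \<eta> x $ k"] by (simp add: test_fun_continuous_on)

lemma test_funs_support_interval:
  fixes \<eta> :: "real \<Rightarrow> real^'n"
  assumes "test_fun \<phi>" and "test_fun \<psi>" and "\<forall>k. test_fun (\<lambda>x. \<eta> x $ k)"
  obtains R where "\<And>x. x \<notin> {-R..R} \<Longrightarrow> \<phi> x = 0 \<and> \<psi> x = 0 \<and> \<eta> x = 0"
proof -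
  have "{x. \<eta> x \<noteq> 0} \<subseteq> (\<Union>k. {x. \<eta> x $ k \<noteq> 0})"
    by (auto simp: vec_eq_iff)
  moreover have "bounded (\<Union>k. {x. \<eta> x $ k \<noteq> 0})"
    using assms(3) unfolding test_fun_def by (intro bounded_UN) auto
  ultimately have "bounded ({x. \<phi> x \<noteq> 0} \<union> {x. \<psi> x \<noteq> 0} \<union> {x. \<eta> x \<noteq> 0})"
    using assms(1,2) bounded_subset unfolding test_fun_def by auto
  then obtain R where R: "\<And>x. \<phi> x \<noteq> 0 \<or> \<psi> x \<noteq> 0 \<or> \<eta> x \<noteq> 0 \<Longrightarrow> \<bar>x\<bar> \<le> R"
    unfolding bounded_real by blast
  show ?thesis
  proof (rule that)
    fix x
    assume "x \<notin> {-R..R}"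
    then have "\<not> \<bar>x\<bar> \<le> R"
      by auto
    then show "\<phi> x = 0 \<and> \<psi> x = 0 \<and> \<eta> x = 0"
      using R by blast
  qed
qed

lemma integrable_on_test_pairing:
  fixes A B :: "real \<Rightarrow> real" and V \<eta> :: "real \<Rightarrow> real^'n"
  assumes "continuous_on UNIV A" and "continuous_on UNIV B" and "continuous_on UNIV V"
    and "test_fun \<phi>" and "test_fun \<psi>" and "\<forall>k. test_fun (\<lambda>x. \<eta> x $ k)"
  shows "(\<lambda>x. A x * \<phi> x + B x * \<psi> x + V x \<bullet> \<eta> x) integrable_on UNIV"
proof -
  obtain R where "\<And>x. x \<notin> {-R..R} \<Longrightarrow> \<phi> x = 0 \<and> \<psi> x = 0 \<and> \<eta> x = 0"
    using test_funs_support_interval[OF assms(4-6)] by blast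
  moreover have "continuous_on {-R..R} (\<lambda>x. A x * \<phi> x + B x * \<psi> x + V x \<bullet> \<eta> x)"
    by (intro continuous_intros continuous_on_subset[OF assms(1)] continuous_on_subset[OF assms(2)]
        continuous_on_subset[OF assms(3)] test_fun_continuous_on[OF assms(4)]
        test_fun_continuous_on[OF assms(5)] test_fun_vec_continuous_on[OF assms(6)]) auto
  ultimately show ?thesis
    by (intro has_integral_integrable[OF has_integral_UNIV_if_support_interval]) auto
qed

lemma fundamental_lemma_calculus_variations_triple:
  fixes A B :: "real \<Rightarrow> real" and V :: "real \<Rightarrow> real^'n"
  assumes "continuous_on UNIV A" and "continuous_on UNIV B" and "continuous_on UNIV V"
    and orth: "\<And>\<phi> \<psi> \<eta>. test_fun \<phi> \<Longrightarrow> test_fun \<psi> \<Longrightarrow> (\<forall>k. test_fun (\<lambda>x. \<eta> x $ k)) \<Longrightarrow>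
          integral UNIV (\<lambda>x. A x * \<phi> x + B x * \<psi> x + V x \<bullet> \<eta> x) = 0"
  shows "A x = 0" and "B x = 0" and "V x = 0"
proof -
  have zero: "\<forall>k. test_fun (\<lambda>x. (0::real^'n) $ k)"
    by (simp add: test_fun_zero)
  show "A x = 0"
  proof (rule fundamental_lemma_calculus_variations[OF assms(1)])
    fix \<phi>
    assume "test_fun \<phi>"
    from orth[OF this test_fun_zero zero] show "integral UNIV (\<lambda>x. A x * \<phi> x) = 0"
      by simp
  qed
  show "B x = 0"
  proof (rule fundamental_lemma_calculus_variations[OF assms(2)])
    fix \<psi>
    assume "test_fun \<psi>"
    from orth[OF test_fun_zero this zero] show "integral UNIV (\<lambda>x. B x * \<psi> x) = 0"
      by simp
  qed
  have "V x $ k = 0" for k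
  proof (rule fundamental_lemma_calculus_variations[where h="\<lambda>x. V x $ k"])
    show "continuous_on UNIV (\<lambda>x. V x $ k)"
      using assms(3) by (rule continuous_on_component)
    fix \<phi>
    assume "test_fun \<phi>"
    then have "test_fun (\<lambda>x. axis k (\<phi> x) $ j)" for j
      using test_fun_zero by (cases "j = k") (simp_all add: axis_def)
    from orth[OF test_fun_zero test_fun_zero allI[OF this]]
    show "integral UNIV (\<lambda>x. V x $ k * \<phi> x) = 0"
      by (simp add: inner_axis)
  qed
  then show "V x = 0"
    by (simp add: vec_eq_iff)
qed

lemma compact_perturbation_in_open:
  fixes w \<eta> :: "real \<Rightarrow> 'a::real_normed_vector"
  assumes "open U" and "\<And>x. w x \<in> U" and "compact K"
    and "continuous_on K w" and "continuous_on K \<eta>" and "\<And>x. x \<notin> K \<Longrightarrow> \<eta> x = 0"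
  obtains \<delta> where "\<delta> > 0" and "\<And>e x. \<bar>e\<bar> < \<delta> \<Longrightarrow> w x + e *\<^sub>R \<eta> x \<in> U"
proof -
  have "compact (w ` K)"
    using assms(4,3) by (rule compact_continuous_image)
  then obtain \<epsilon> where "\<epsilon> > 0" and \<epsilon>: "\<And>y. y \<in> w ` K \<Longrightarrow> ball y \<epsilon> \<subseteq> U"
    by (rule Heine_Borel_lemma[of _ "{U}"]) (use assms(1,2) in auto)
  obtain M where "M > 0" and M: "\<And>x. x \<in> K \<Longrightarrow> norm (\<eta> x) \<le> M"
    using compact_imp_bounded[OF compact_continuous_image[OF assms(5,3)]]
    unfolding bounded_pos by auto
  have "w x + e *\<^sub>R \<eta> x \<in> U" if "\<bar>e\<bar> < \<epsilon> / M" for e x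
  proof (cases "x \<in> K")
    case True
    have "norm (e *\<^sub>R \<eta> x) \<le> \<bar>e\<bar> * M"
      using M[OF True] by (simp add: mult_left_mono)
    also have "\<dots> < \<epsilon>"
      using that \<open>M > 0\<close> by (simp add: field_simps)
    finally show ?thesis
      using \<epsilon>[of "w x"] True by (auto simp: dist_norm)
  next
    case False
    then show ?thesis
      using assms(2,6) by simp
  qed
  then show ?thesis
    using that[of "\<epsilon> / M"] \<open>\<epsilon> > 0\<close> \<open>M > 0\<close> by simp
qed

lemma has_real_derivative_integral_interval_variation:
  fixes I I' :: "real \<Rightarrow> real \<Rightarrow> real"
  assumes "open T" and "convex T" and "0 \<in> T"
    and cont: "\<And>e. e \<in> T \<Longrightarrow> continuous_on {a..b} (I e)"
    and deriv: "\<And>e x. e \<in> T \<Longrightarrow> x \<in> {a..b} \<Longrightarrow> ((\<lambda>e. I e x) has_real_derivative I' e x) (at e)"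
    and cont': "continuous_on (T \<times> {a..b}) (\<lambda>(e, x). I' e x)"
  shows "((\<lambda>e. integral {a..b} (I e)) has_real_derivative integral {a..b} (I' 0)) (at 0)"
proof -
  have "((\<lambda>e. integral (cbox a b) (I e)) has_real_derivative integral (cbox a b) (I' 0)) (at 0 within T)"
  proof (rule leibniz_rule_field_derivative)
    show "((\<lambda>e. I e x) has_real_derivative I' e x) (at e within T)" if "e \<in> T" and "x \<in> cbox a b" for e x
      using deriv that by (simp add: has_field_derivative_at_within)
    show "I e integrable_on cbox a b" if "e \<in> T" for e
      using integrable_continuous_interval[OF cont[OF that]] by simp
  qed (use cont' \<open>0 \<in> T\<close> \<open>convex T\<close> in simp_all)
  then show ?thesis
    using at_within_open[OF \<open>0 \<in> T\<close> \<open>open T\<close>] by simp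
qed

lemma has_real_derivative_integral_compact_variation:
  fixes I I' :: "real \<Rightarrow> real \<Rightarrow> real"
  assumes "open T" and "convex T" and "0 \<in> T"
    and fixed: "\<And>e x. e \<in> T \<Longrightarrow> x \<notin> {a..b} \<Longrightarrow> I e x = I 0 x"
    and fixed': "\<And>x. x \<notin> {a..b} \<Longrightarrow> I' 0 x = 0"
    and cont: "\<And>e. e \<in> T \<Longrightarrow> continuous_on {a..b} (I e)"
    and deriv: "\<And>e x. e \<in> T \<Longrightarrow> x \<in> {a..b} \<Longrightarrow> ((\<lambda>e. I e x) has_real_derivative I' e x) (at e)"
    and cont': "continuous_on (T \<times> {a..b}) (\<lambda>(e, x). I' e x)"
  shows "((\<lambda>e. integral UNIV (I e)) has_real_derivative
           (if I 0 integrable_on UNIV then integral UNIV (I' 0) else 0)) (at 0)"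
  \<comment> \<open>A non-integrable function has integral \<open>0\<close>, and a variation supported in \<open>{a..b}\<close> cannot
    make it integrable; hence the second branch.\<close>
proof -
  define D where "D e x = I e x - I 0 x" for e x
  have cont_D: "continuous_on {a..b} (D e)" if "e \<in> T" for e
    unfolding D_def using cont[OF that] cont[OF \<open>0 \<in> T\<close>] by (rule continuous_on_diff)
  have D: "(D e has_integral integral {a..b} (D e)) UNIV" if "e \<in> T" for e
    using cont_D[OF that] fixed[OF that] by (intro has_integral_UNIV_if_support_interval) (simp_all add: D_def)
  have "((\<lambda>e. integral {a..b} (D e)) has_real_derivative integral {a..b} (I' 0)) (at 0)"
    using deriv cont' by (intro has_real_derivative_integral_interval_variation[OF assms(1-3) cont_D])
      (auto simp: D_def intro!: derivative_eq_intros)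
  moreover have "integral {a..b} (I' 0) = integral UNIV (I' 0)"
  proof -
    have "continuous_on {a..b} (\<lambda>x. (0::real, x))"
      by (intro continuous_intros)
    then have "continuous_on {a..b} (I' 0)"
      using continuous_on_compose2[OF cont'] \<open>0 \<in> T\<close> by fastforce
    then show ?thesis
      using fixed' by (intro integral_unique[symmetric] has_integral_UNIV_if_support_interval)
  qed
  ultimately have Leibniz: "((\<lambda>e. integral {a..b} (D e)) has_real_derivative integral UNIV (I' 0)) (at 0)"
    by simp
  show ?thesis
  proof (cases "I 0 integrable_on UNIV")
    case True
    have "((\<lambda>e. integral UNIV (I 0) + integral {a..b} (D e))
        has_real_derivative integral UNIV (I' 0)) (at 0)"
      using Leibniz by (auto intro!: derivative_eq_intros)
    then have "((\<lambda>e. integral UNIV (I e)) has_real_derivative integral UNIV (I' 0)) (at 0)"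
    proof (rule has_field_derivative_transform_within_open[OF _ \<open>open T\<close> \<open>0 \<in> T\<close>])
      show "integral UNIV (I 0) + integral {a..b} (D e) = integral UNIV (I e)" if "e \<in> T" for e
        using has_integral_add[OF integrable_integral[OF True] D[OF that]]
        by (simp add: D_def integral_unique)
    qed
    with True show ?thesis
      by simp
  next
    case False
    have "\<not> I e integrable_on UNIV" if "e \<in> T" for e
    proof
      assume "I e integrable_on UNIV"
      then have "(\<lambda>x. I e x - D e x) integrable_on UNIV"
        using D[OF that] by (intro integrable_diff) auto
      with False show False
        by (simp add: D_def)
    qed
    then have "((\<lambda>e. integral UNIV (I e)) has_real_derivative 0) (at 0)"
      by (intro has_field_derivative_transform_within_open[OF DERIV_const \<open>open T\<close> \<open>0 \<in> T\<close>])
        (simp add: not_integrable_integral)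
    with False show ?thesis
      by simp
  qed
qed

lemma continuous_on_compose3:
  fixes G :: "real \<Rightarrow> real \<Rightarrow> 'v::topological_space \<Rightarrow> 'c::topological_space"
  assumes "continuous_on (UNIV \<times> UNIV \<times> U) (\<lambda>(r, s, v). G r s v)"
    and "continuous_on S a" and "continuous_on S b" and "continuous_on S c"
    and "\<And>p. p \<in> S \<Longrightarrow> c p \<in> U"
  shows "continuous_on S (\<lambda>p. G (a p) (b p) (c p))"
proof -
  have "continuous_on S (\<lambda>p. (a p, b p, c p))"
    using assms(2-4) by (intro continuous_intros)
  from continuous_on_compose2[OF assms(1) this] assms(5) show ?thesis
    by auto
qed

lemma has_real_derivative_local_functional:
  fixes L Lr Ls :: "real \<Rightarrow> real \<Rightarrow> real^'n \<Rightarrow> real"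
    and Lv :: "real \<Rightarrow> real \<Rightarrow> real^'n \<Rightarrow> real^'n"
    and \<eta> w :: "real \<Rightarrow> real^'n"
  assumes "open U"
    and dL: "\<And>r s v a b c. v \<in> U \<Longrightarrow>
        ((\<lambda>e. L (r + e * a) (s + e * b) (v + e *\<^sub>R c)) has_real_derivative
           Lr r s v * a + Ls r s v * b + Lv r s v \<bullet> c) (at 0)"
    and cL: "continuous_on (UNIV \<times> UNIV \<times> U) (\<lambda>(r, s, v). L r s v)"
    and cLr: "continuous_on (UNIV \<times> UNIV \<times> U) (\<lambda>(r, s, v). Lr r s v)"
    and cLs: "continuous_on (UNIV \<times> UNIV \<times> U) (\<lambda>(r, s, v). Ls r s v)"
    and cLv: "continuous_on (UNIV \<times> UNIV \<times> U) (\<lambda>(r, s, v). Lv r s v)"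
    and c\<rho>: "continuous_on UNIV \<rho>" and cu: "continuous_on UNIV u" and cw: "continuous_on UNIV w"
    and wU: "\<And>x. w x \<in> U"
    and t\<phi>: "test_fun \<phi>" and t\<psi>: "test_fun \<psi>" and t\<eta>: "\<forall>k. test_fun (\<lambda>x. \<eta> x $ k)"
  shows "((\<lambda>e. integral UNIV (\<lambda>x. L (\<rho> x + e * \<phi> x) (u x + e * \<psi> x) (w x + e *\<^sub>R \<eta> x)))
     has_real_derivative
       (if (\<lambda>x. L (\<rho> x) (u x) (w x)) integrable_on UNIV
        then integral UNIV (\<lambda>x. Lr (\<rho> x) (u x) (w x) * \<phi> x + Ls (\<rho> x) (u x) (w x) * \<psi> x
                                 + Lv (\<rho> x) (u x) (w x) \<bullet> \<eta> x)
        else 0)) (at 0)"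
proof -
  obtain R where support: "\<And>x. x \<notin> {-R..R} \<Longrightarrow> \<phi> x = 0 \<and> \<psi> x = 0 \<and> \<eta> x = 0"
    using test_funs_support_interval[OF t\<phi> t\<psi> t\<eta>] by blast
  have c\<phi>: "continuous_on S \<phi>" and c\<psi>: "continuous_on S \<psi>" and c\<eta>: "continuous_on S \<eta>" for S
    using t\<phi> t\<psi> t\<eta> by (simp_all add: test_fun_continuous_on test_fun_vec_continuous_on)
  obtain \<delta> where "\<delta> > 0" and \<delta>: "\<And>e x. \<bar>e\<bar> < \<delta> \<Longrightarrow> w x + e *\<^sub>R \<eta> x \<in> U"
  proof (rule compact_perturbation_in_open[OF \<open>open U\<close> wU compact_Icc, where \<eta>=\<eta>])
    show "continuous_on {-R..R} w"
      using cw by (rule continuous_on_subset) simp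
  qed (use support c\<eta> in auto)
  define T where "T = ball (0::real) \<delta>"
  have T: "open T" "convex T" "0 \<in> T" and inU: "\<And>p. p \<in> T \<times> UNIV \<Longrightarrow> w (snd p) + fst p *\<^sub>R \<eta> (snd p) \<in> U"
    using \<open>\<delta> > 0\<close> \<delta> by (auto simp: T_def)
  define I where "I e x = L (\<rho> x + e * \<phi> x) (u x + e * \<psi> x) (w x + e *\<^sub>R \<eta> x)" for e x
  define I' where "I' e x = Lr (\<rho> x + e * \<phi> x) (u x + e * \<psi> x) (w x + e *\<^sub>R \<eta> x) * \<phi> x
      + Ls (\<rho> x + e * \<phi> x) (u x + e * \<psi> x) (w x + e *\<^sub>R \<eta> x) * \<psi> x
      + Lv (\<rho> x + e * \<phi> x) (u x + e * \<psi> x) (w x + e *\<^sub>R \<eta> x) \<bullet> \<eta> x" for e x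
  have on_pairs: "continuous_on (T \<times> UNIV) (\<lambda>p. f (snd p))" if "continuous_on UNIV f"
    for f :: "real \<Rightarrow> 'b::topological_space"
    using continuous_on_compose2[OF that continuous_on_snd[OF continuous_on_id]] by simp
  have args: "continuous_on (T \<times> UNIV) (\<lambda>p. \<rho> (snd p) + fst p * \<phi> (snd p))"
    "continuous_on (T \<times> UNIV) (\<lambda>p. u (snd p) + fst p * \<psi> (snd p))"
    "continuous_on (T \<times> UNIV) (\<lambda>p. w (snd p) + fst p *\<^sub>R \<eta> (snd p))"
    by (intro continuous_intros on_pairs c\<rho> cu cw c\<phi> c\<psi> c\<eta>)+
  have cI': "continuous_on (T \<times> UNIV) (\<lambda>(e, x). I' e x)"
    unfolding I'_def case_prod_beta
    by (intro continuous_intros continuous_on_compose3[OF cLr args inU]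
        continuous_on_compose3[OF cLs args inU] continuous_on_compose3[OF cLv args inU]
        on_pairs c\<phi> c\<psi> c\<eta>)
  have deriv: "((\<lambda>e. integral UNIV (I e)) has_real_derivative
           (if I 0 integrable_on UNIV then integral UNIV (I' 0) else 0)) (at 0)"
  proof (rule has_real_derivative_integral_compact_variation[OF T])
    show "I e x = I 0 x" and "I' 0 x = 0" if "x \<notin> {-R..R}" for e x
      using support[OF that] by (simp_all add: I_def I'_def)
    show "continuous_on {-R..R} (I e)" if "e \<in> T" for e
      unfolding I_def
      by (intro continuous_on_compose3[OF cL] continuous_intros c\<phi> c\<psi> c\<eta>
          continuous_on_subset[OF c\<rho> subset_UNIV] continuous_on_subset[OF cu subset_UNIV]
          continuous_on_subset[OF cw subset_UNIV])
        (use inU that in auto)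
    show "((\<lambda>e. I e x) has_real_derivative I' e x) (at e)" if "e \<in> T" for e x
    proof -
      have "w x + e *\<^sub>R \<eta> x \<in> U"
        using inU[of "(e, x)"] that by simp
      then have "((\<lambda>t. L ((\<rho> x + e * \<phi> x) + t * \<phi> x) ((u x + e * \<psi> x) + t * \<psi> x)
          ((w x + e *\<^sub>R \<eta> x) + t *\<^sub>R \<eta> x)) has_real_derivative I' e x) (at 0)"
        unfolding I'_def by (rule dL)
      moreover have "(\<lambda>t. L ((\<rho> x + e * \<phi> x) + t * \<phi> x) ((u x + e * \<psi> x) + t * \<psi> x)
          ((w x + e *\<^sub>R \<eta> x) + t *\<^sub>R \<eta> x)) = (\<lambda>t. I (e + t) x)"
        by (simp add: I_def algebra_simps)
      ultimately show ?thesis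
        using DERIV_shift[of "\<lambda>e. I e x" "I' e x" 0 e] by (simp add: add.commute)
    qed
    show "continuous_on (T \<times> {-R..R}) (\<lambda>(e, x). I' e x)"
      using cI' by (rule continuous_on_subset) auto
  qed
  have eqs: "I 0 = (\<lambda>x. L (\<rho> x) (u x) (w x))"
    "(\<lambda>e. integral UNIV (I e))
      = (\<lambda>e. integral UNIV (\<lambda>x. L (\<rho> x + e * \<phi> x) (u x + e * \<psi> x) (w x + e *\<^sub>R \<eta> x)))"
    "I' 0 = (\<lambda>x. Lr (\<rho> x) (u x) (w x) * \<phi> x + Ls (\<rho> x) (u x) (w x) * \<psi> x
                                 + Lv (\<rho> x) (u x) (w x) \<bullet> \<eta> x)"
    by (simp_all add: fun_eq_iff I_def[abs_def] I'_def)
  show ?thesis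
    using deriv[unfolded eqs] .
qed

lemma C1_fun_continuous_on: "C1_fun f \<Longrightarrow> continuous_on S f"
  unfolding C1_fun_def
  by (meson continuous_at_imp_continuous_on differentiable_imp_continuous_within)

lemma has_fderivs_continuous_on:
  assumes "has_fderivs F \<rho> u w F\<rho> Fu Fw"
  shows "continuous_on S F\<rho>" and "continuous_on S Fu" and "continuous_on S Fw"
  using assms continuous_on_vec_lambda[of S "\<lambda>k x. Fw x $ k"]
  unfolding has_fderivs_def by (simp_all add: C1_fun_continuous_on)

lemma admissible_state_continuous_on:
  assumes "admissible_state U \<rho> u w"
  shows "continuous_on S \<rho>" and "continuous_on S u" and "continuous_on S w"
  using assms continuous_on_vec_lambda[of S "\<lambda>k x. w x $ k"]
  unfolding admissible_state_def field_def by (simp_all add: smooth_fun_continuous_on)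

lemma has_fderivs_local_functional:
  fixes L Lr Ls :: "real \<Rightarrow> real \<Rightarrow> real^'n \<Rightarrow> real"
    and Lv :: "real \<Rightarrow> real \<Rightarrow> real^'n \<Rightarrow> real^'n"
  assumes "open U"
    and dL: "\<And>r s v a b c. v \<in> U \<Longrightarrow>
        ((\<lambda>e. L (r + e * a) (s + e * b) (v + e *\<^sub>R c)) has_real_derivative
           Lr r s v * a + Ls r s v * b + Lv r s v \<bullet> c) (at 0)"
    and cL: "continuous_on (UNIV \<times> UNIV \<times> U) (\<lambda>(r, s, v). L r s v)"
    and cLr: "continuous_on (UNIV \<times> UNIV \<times> U) (\<lambda>(r, s, v). Lr r s v)"
    and cLs: "continuous_on (UNIV \<times> UNIV \<times> U) (\<lambda>(r, s, v). Ls r s v)"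
    and cLv: "continuous_on (UNIV \<times> UNIV \<times> U) (\<lambda>(r, s, v). Lv r s v)"
    and adm: "admissible_state U \<rho> u w"
    and hC: "has_fderivs (\<lambda>\<rho> u w. integral UNIV (\<lambda>x. L (\<rho> x) (u x) (w x))) \<rho> u w C\<rho> Cu Cw"
  defines "Lint \<equiv> (\<lambda>x. L (\<rho> x) (u x) (w x)) integrable_on UNIV"
  shows "C\<rho> = (if Lint then (\<lambda>x. Lr (\<rho> x) (u x) (w x)) else (\<lambda>x. 0))"
    and "Cu = (if Lint then (\<lambda>x. Ls (\<rho> x) (u x) (w x)) else (\<lambda>x. 0))"
    and "Cw = (if Lint then (\<lambda>x. Lv (\<rho> x) (u x) (w x)) else (\<lambda>x. 0))"
proof -
  define K\<rho> where "K\<rho> = (if Lint then (\<lambda>x. Lr (\<rho> x) (u x) (w x)) else (\<lambda>x. 0))"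
  define Ku where "Ku = (if Lint then (\<lambda>x. Ls (\<rho> x) (u x) (w x)) else (\<lambda>x. 0))"
  define Kw where "Kw = (if Lint then (\<lambda>x. Lv (\<rho> x) (u x) (w x)) else (\<lambda>x. 0))"
  have wU: "\<And>x. w x \<in> U"
    using adm unfolding admissible_state_def by blast
  note c = admissible_state_continuous_on[OF adm]
  have cK: "continuous_on UNIV K\<rho>" "continuous_on UNIV Ku" "continuous_on UNIV Kw"
    unfolding K\<rho>_def Ku_def Kw_def
    using continuous_on_compose3[OF cLr c wU] continuous_on_compose3[OF cLs c wU]
      continuous_on_compose3[OF cLv c wU]
    by simp_all
  have cC: "continuous_on UNIV C\<rho>" "continuous_on UNIV Cu" "continuous_on UNIV Cw"
    using has_fderivs_continuous_on[OF hC] by simp_all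
  have orth: "integral UNIV (\<lambda>x. (C\<rho> x - K\<rho> x) * \<phi> x + (Cu x - Ku x) * \<psi> x + (Cw x - Kw x) \<bullet> \<eta> x) = 0"
    if t: "test_fun \<phi>" "test_fun \<psi>" "\<forall>k. test_fun (\<lambda>x. \<eta> x $ k)" for \<phi> \<psi> \<eta>
  proof -
    have "((\<lambda>e. integral UNIV (\<lambda>x. L (\<rho> x + e * \<phi> x) (u x + e * \<psi> x) (w x + e *\<^sub>R \<eta> x)))
        has_real_derivative integral UNIV (\<lambda>x. C\<rho> x * \<phi> x + Cu x * \<psi> x + Cw x \<bullet> \<eta> x)) (at 0)"
      using hC t unfolding has_fderivs_def by blast
    moreover have "((\<lambda>e. integral UNIV (\<lambda>x. L (\<rho> x + e * \<phi> x) (u x + e * \<psi> x) (w x + e *\<^sub>R \<eta> x)))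
        has_real_derivative integral UNIV (\<lambda>x. K\<rho> x * \<phi> x + Ku x * \<psi> x + Kw x \<bullet> \<eta> x)) (at 0)"
    proof -
      have "(if Lint then integral UNIV (\<lambda>x. Lr (\<rho> x) (u x) (w x) * \<phi> x + Ls (\<rho> x) (u x) (w x) * \<psi> x
                                 + Lv (\<rho> x) (u x) (w x) \<bullet> \<eta> x) else 0)
          = integral UNIV (\<lambda>x. K\<rho> x * \<phi> x + Ku x * \<psi> x + Kw x \<bullet> \<eta> x)"
        by (cases Lint) (simp_all add: K\<rho>_def Ku_def Kw_def)
      with has_real_derivative_local_functional[OF \<open>open U\<close> dL cL cLr cLs cLv c wU t]
      show ?thesis
        by (simp only: Lint_def)
    qed
    ultimately have "integral UNIV (\<lambda>x. C\<rho> x * \<phi> x + Cu x * \<psi> x + Cw x \<bullet> \<eta> x)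
        = integral UNIV (\<lambda>x. K\<rho> x * \<phi> x + Ku x * \<psi> x + Kw x \<bullet> \<eta> x)"
      by (rule DERIV_unique)
    then show ?thesis
      using integral_diff[OF integrable_on_test_pairing[OF cC t] integrable_on_test_pairing[OF cK t]]
      by (simp add: algebra_simps inner_diff_left)
  qed
  have "continuous_on UNIV (\<lambda>x. C\<rho> x - K\<rho> x)" "continuous_on UNIV (\<lambda>x. Cu x - Ku x)"
    "continuous_on UNIV (\<lambda>x. Cw x - Kw x)"
    using cC cK by (simp_all add: continuous_on_diff)
  from fundamental_lemma_calculus_variations_triple[OF this orth]
  have "C\<rho> x - K\<rho> x = 0" "Cu x - Ku x = 0" "Cw x - Kw x = 0" for x
    by blast+
  then show "C\<rho> = (if Lint then (\<lambda>x. Lr (\<rho> x) (u x) (w x)) else (\<lambda>x. 0))"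
    and "Cu = (if Lint then (\<lambda>x. Ls (\<rho> x) (u x) (w x)) else (\<lambda>x. 0))"
    and "Cw = (if Lint then (\<lambda>x. Lv (\<rho> x) (u x) (w x)) else (\<lambda>x. 0))"
    unfolding K\<rho>_def[symmetric] Ku_def[symmetric] Kw_def[symmetric] by (simp_all add: fun_eq_iff)
qed

lemma matrix_inv_right: "invertible A \<Longrightarrow> A ** matrix_inv A = mat 1"
  and matrix_inv_left: "invertible A \<Longrightarrow> matrix_inv A ** A = mat 1"
  unfolding invertible_def matrix_inv_def by (metis (mono_tags, lifting) someI_ex)+

lemma transpose_matrix_inv_symmetric:
  fixes g :: "real^'n^'n"
  assumes "invertible g" and "transpose g = g"
  shows "transpose (matrix_inv g) = matrix_inv g"
proof -
  have "transpose (matrix_inv g) ** g = mat 1"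
    using arg_cong[OF matrix_inv_right[OF assms(1)], of transpose] assms(2)
    by (simp add: matrix_transpose_mul transpose_mat)
  have "transpose (matrix_inv g) = transpose (matrix_inv g) ** (g ** matrix_inv g)"
    using matrix_inv_right[OF assms(1)] by simp
  also have "\<dots> = (transpose (matrix_inv g) ** g) ** matrix_inv g"
    by (simp add: matrix_mul_assoc)
  also have "\<dots> = matrix_inv g"
    using \<open>transpose (matrix_inv g) ** g = mat 1\<close> by simp
  finally show ?thesis .
qed

lemma invertible_mult_eq_0_cancel:
  fixes A B :: "real^'n^'n"
  assumes "invertible B" and "A ** B = 0"
  shows "A = 0"
  using arg_cong[OF assms(2), of "\<lambda>M. M ** matrix_inv B"] matrix_inv_right[OF assms(1)]
  by (simp add: matrix_mul_assoc[symmetric])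

lemma matrix_congruence_inverse:
  fixes J A g :: "real^'n^'n"
  assumes "invertible J" and "invertible g" and "J ** A ** transpose J = g"
  shows "A ** transpose J ** matrix_inv g ** J = mat 1"
proof -
  have "A ** transpose J = matrix_inv J ** g"
    using arg_cong[OF assms(3), of "\<lambda>M. matrix_inv J ** M"] matrix_inv_left[OF assms(1)]
    by (simp add: matrix_mul_assoc)
  then have "A ** transpose J ** matrix_inv g ** J = matrix_inv J ** (g ** matrix_inv g) ** J"
    by (simp add: matrix_mul_assoc)
  also have "\<dots> = mat 1"
    using matrix_inv_right[OF assms(2)] matrix_inv_left[OF assms(1)] by simp
  finally show ?thesis .
qed

lemma row_matrix_mult: "(A ** B) $ k = A $ k v* B"
  by (simp add: matrix_matrix_mult_def vector_matrix_mult_def vec_eq_iff)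

lemma bounded_bilinear_vector_matrix_mult:
  "bounded_bilinear (\<lambda>(x::real^'m) (M::real^'n^'m). x v* M)"
proof -
  have "x v* (c *\<^sub>R M) = c *\<^sub>R (x v* M)" for x :: "real^'m" and M :: "real^'n^'m" and c
    by (simp add: vector_matrix_mult_def vec_eq_iff sum_distrib_left mult.left_commute)
  then have "bilinear (\<lambda>(x::real^'m) (M::real^'n^'m). x v* M)"
    by (simp add: bilinear_def linear_iff vector_matrix_left_distrib vector_matrix_mult_add_rdistrib
        scaleR_vector_matrix_assoc)
  then show ?thesis
    by (simp add: bilinear_conv_bounded_bilinear)
qed

lemma symmetric_matrix_inner: "transpose G = G \<Longrightarrow> x \<bullet> (G *v y) = (G *v x) \<bullet> (y :: real^'n)"
  by (metis dot_lmul_matrix vector_transpose_matrix)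

lemma has_derivative_half_quadratic_form:
  fixes G :: "real^'n^'n" and \<nu> :: "'a::real_normed_vector \<Rightarrow> real^'n"
  assumes "transpose G = G" and "(\<nu> has_derivative \<nu>') (at v)"
  shows "((\<lambda>v. \<nu> v \<bullet> (G *v \<nu> v) / 2) has_derivative (\<lambda>h. (G *v \<nu> v) \<bullet> \<nu>' h)) (at v)"
proof -
  have inner: "((\<lambda>v. \<nu> v \<bullet> (G *v \<nu> v)) has_derivative
      (\<lambda>h. \<nu> v \<bullet> (G *v \<nu>' h) + \<nu>' h \<bullet> (G *v \<nu> v))) (at v)"
    using assms(2) bounded_linear.has_derivative[OF matrix_vector_mul_bounded_linear[of G] assms(2)]
    by (rule has_derivative_inner)
  have symmetric: "\<nu> v \<bullet> (G *v \<nu>' h) + \<nu>' h \<bullet> (G *v \<nu> v) = 2 * ((G *v \<nu> v) \<bullet> \<nu>' h)" for h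
    using symmetric_matrix_inner[OF assms(1), of "\<nu> v" "\<nu>' h"] by (simp add: inner_commute)
  from has_derivative_mult_right[OF inner, of "1 / 2"] show ?thesis
    by (simp add: symmetric)
qed

lemma flat_half_quadratic_form_identity:
  fixes J D A B g :: "real^'n^'n" and y h :: "real^'n"
  assumes "transpose A = A" and "invertible J" and "invertible g"
    and "J ** A ** transpose J = g" and "D ** A + J ** B = 0"
  shows "h + (- ((matrix_inv g *v (J *v h)) v* J + y v* D)) v* A + (- (y v* J)) v* B = 0"
proof -
  have "(matrix_inv g *v (J *v h)) v* (J ** A) = (A ** transpose J ** matrix_inv g ** J) *v h"
    using assms(1)
    by (simp add: matrix_transpose_mul matrix_vector_mul_assoc matrix_mul_assoc flip: transpose_matrix_vector)
  also have "\<dots> = h"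
    using matrix_congruence_inverse[OF assms(2-4)] by simp
  finally have congruence: "(matrix_inv g *v (J *v h)) v* (J ** A) = h" .
  have neg: "(- x) v* M = - (x v* M)" for x :: "real^'n" and M :: "real^'n^'n"
    by (simp add: vector_matrix_mult_def vec_eq_iff sum_negf)
  have "(- ((matrix_inv g *v (J *v h)) v* J + y v* D)) v* A + (- (y v* J)) v* B
      = - ((matrix_inv g *v (J *v h)) v* (J ** A)) - y v* (D ** A + J ** B)"
    by (simp add: neg vector_matrix_mult_diff_distrib vector_matrix_left_distrib
        vector_matrix_mult_add_rdistrib vector_matrix_mul_assoc)
  then show ?thesis
    using congruence assms(5) by (simp add: add.assoc)
qed

lemma sum_sum_mult_eq_inner_vector_matrix:
  fixes X b :: "real^'n" and A :: "real^'n^'n"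
  shows "(\<Sum>k\<in>UNIV. \<Sum>l\<in>UNIV. X $ k * A $ k $ l * b $ l) = (X v* A) \<bullet> b"
  unfolding dot_lmul_matrix
  by (simp add: inner_vec_def matrix_vector_mult_def sum_distrib_left mult.assoc)

section \<open>Casimirs of the partially decoupled bracket\<close>

lemma integral_deriv_eq_0_at_infinity:
  fixes h h' :: "real \<Rightarrow> real"
  assumes deriv: "\<And>x. (h has_real_derivative h' x) (at x)" and lim: "(h \<longlongrightarrow> 0) at_infinity"
  shows "integral UNIV h' = 0"
proof (cases "h' integrable_on UNIV")
  case False
  then show ?thesis
    by (rule not_integrable_integral)
next
  case True
  define y where "y = integral UNIV h'"
  have "\<bar>y\<bar> < 3 * e" if "e > 0" for e
  proof -
    have "\<not> (\<exists>a b. (UNIV :: real set) = cbox a b)"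
      using not_bounded_UNIV bounded_cbox by metis
    with has_integral_altD[OF integrable_integral[OF True] _ \<open>e > 0\<close>]
    obtain B where "B > 0" and B: "\<And>a b. ball 0 B \<subseteq> cbox a b \<Longrightarrow>
        \<exists>z. (h' has_integral z) (cbox a b) \<and> norm (z - y) < e"
      unfolding y_def by auto
    obtain N where N: "\<And>x. N \<le> norm x \<Longrightarrow> \<bar>h x\<bar> < e"
      using lim \<open>e > 0\<close> unfolding tendsto_iff eventually_at_infinity by (auto simp: dist_real_def)
    define c where "c = max B N + 1"
    have "ball 0 B \<subseteq> cbox (-c) c"
      by (auto simp: c_def dist_real_def cbox_interval)
    from B[OF this] obtain z where z: "(h' has_integral z) {-c..c}" and "norm (z - y) < e"
      by (auto simp: cbox_interval)
    have "(h' has_integral (h c - h (-c))) {-c..c}"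
      using \<open>B > 0\<close> deriv
      by (intro fundamental_theorem_of_calculus)
        (auto simp: c_def has_real_derivative_iff_has_vector_derivative[symmetric]
          intro: has_field_derivative_at_within)
    then have "z = h c - h (-c)"
      using z by (rule has_integral_unique[symmetric])
    moreover have "\<bar>h c\<bar> < e" and "\<bar>h (-c)\<bar> < e"
      using N by (simp_all add: c_def)
    ultimately show ?thesis
      using \<open>norm (z - y) < e\<close> by simp
  qed
  from this[of "\<bar>y\<bar> / 3"] have "y = 0"
    by fastforce
  then show ?thesis
    by (simp add: y_def)
qed

lemma has_vector_derivative_vec_componentwise:
  fixes f :: "real \<Rightarrow> real^'n"
  assumes "\<And>k. ((\<lambda>y. f y $ k) has_real_derivative f' $ k) (at x)"
  shows "(f has_vector_derivative f') (at x)"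
proof -
  have d: "((\<lambda>y. \<Sum>k\<in>UNIV. f y $ k *\<^sub>R axis k 1) has_vector_derivative (\<Sum>k\<in>UNIV. f' $ k *\<^sub>R axis k 1)) (at x)"
    by (intro has_vector_derivative_sum has_vector_derivative_scaleR[where g'=0, THEN has_vector_derivative_eq_rhs]
        has_vector_derivative_const) (auto intro: assms)
  have f': "(\<Sum>k\<in>UNIV. f' $ k *\<^sub>R axis k 1) = f'"
    by (simp add: basis_expansion scalar_mult_eq_scaleR[symmetric])
  have f: "f = (\<lambda>y. \<Sum>k\<in>UNIV. f y $ k *\<^sub>R axis k 1)"
    by (simp add: basis_expansion scalar_mult_eq_scaleR[symmetric])
  show ?thesis
    by (subst f) (rule has_vector_derivative_eq_rhs[OF d f'])
qed

lemma admissible_state_has_vector_derivative: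
  assumes "admissible_state U \<rho> u w"
  shows "(w has_vector_derivative dx_vec w x) (at x)"
proof (rule has_vector_derivative_vec_componentwise)
  fix k
  have "field (\<lambda>y. w y $ k)"
    using assms unfolding admissible_state_def by blast
  then show "((\<lambda>y. w y $ k) has_real_derivative dx_vec w x $ k) (at x)"
    unfolding field_def dx_vec_def using smooth_fun_has_real_derivative by simp
qed

lemma pd_bracket_zero_left: "pd_bracket \<alpha> \<beta> \<rho> w (\<lambda>x. 0) (\<lambda>x. 0) (\<lambda>x. 0) F\<rho> Fu Fw = 0"
  by (simp add: pd_bracket_def)

lemma admissible_state_tendsto_0:
  assumes "admissible_state U \<rho> u w"
  shows "(w \<longlongrightarrow> 0) at_infinity"
proof (rule vec_tendstoI)
  fix k
  have "field (\<lambda>x. w x $ k)"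
    using assms unfolding admissible_state_def by blast
  then have "decays ((deriv ^^ 0) (\<lambda>x. w x $ k))"
    unfolding field_def by blast
  then show "((\<lambda>x. w x $ k) \<longlongrightarrow> 0 $ k) at_infinity"
    by (simp add: decays_def)
qed

lemma has_real_derivative_compose_line:
  fixes \<phi> :: "'a::real_normed_vector \<Rightarrow> real"
  assumes "(\<phi> has_derivative \<phi>') (at v)"
  shows "((\<lambda>e. \<phi> (v + e *\<^sub>R c)) has_real_derivative \<phi>' c) (at 0)"
proof -
  have "((\<lambda>e. v + e *\<^sub>R c) has_vector_derivative c) (at 0)"
    by (auto intro!: derivative_eq_intros)
  moreover have "(\<phi> has_derivative \<phi>') (at ((\<lambda>e. v + e *\<^sub>R c) 0) within range (\<lambda>e. v + e *\<^sub>R c))"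
    using has_derivative_at_withinI[OF assms] by simp
  ultimately have "(\<phi> \<circ> (\<lambda>e. v + e *\<^sub>R c) has_vector_derivative \<phi>' c) (at 0)"
    by (rule vector_derivative_diff_chain_within)
  then show ?thesis
    by (simp add: o_def has_real_derivative_iff_has_vector_derivative)
qed

lemma has_fderivs_density_functional:
  fixes \<phi> :: "real^'n \<Rightarrow> real" and d\<phi> :: "real^'n \<Rightarrow> real^'n"
  assumes "open U"
    and \<phi>: "\<And>v. v \<in> U \<Longrightarrow> (\<phi> has_derivative (\<lambda>h. d\<phi> v \<bullet> h)) (at v)"
    and cd\<phi>: "continuous_on U d\<phi>"
    and adm: "admissible_state U \<rho> u w"
    and hC: "has_fderivs (\<lambda>\<rho> u w. integral UNIV (\<lambda>x. a * u x + \<rho> x * \<phi> (w x))) \<rho> u w C\<rho> Cu Cw"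
  defines "Lint \<equiv> (\<lambda>x. a * u x + \<rho> x * \<phi> (w x)) integrable_on UNIV"
  shows "C\<rho> = (if Lint then (\<lambda>x. \<phi> (w x)) else (\<lambda>x. 0))"
    and "Cu = (if Lint then (\<lambda>x. a) else (\<lambda>x. 0))"
    and "Cw = (if Lint then (\<lambda>x. \<rho> x *\<^sub>R d\<phi> (w x)) else (\<lambda>x. 0))"
proof -
  have c\<phi>: "continuous_on U \<phi>"
    using \<phi> by (intro has_derivative_continuous_on) (auto intro: has_derivative_at_withinI)
  have on_U: "continuous_on (UNIV \<times> UNIV \<times> U) (\<lambda>p. f (snd (snd p)))" if "continuous_on U f"
    for f :: "real^'n \<Rightarrow> 'b::topological_space"
    by (rule continuous_on_compose2[OF that continuous_on_snd[OF continuous_on_snd[OF continuous_on_id]]])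
      auto
  have dL: "((\<lambda>e. a * (s + e * b) + (r + e * a') * \<phi> (v + e *\<^sub>R c)) has_real_derivative
      \<phi> v * a' + a * b + (r *\<^sub>R d\<phi> v) \<bullet> c) (at 0)" if "v \<in> U" for r s v a' b c
    using has_real_derivative_compose_line[OF \<phi>[OF that], of c]
    by (auto intro!: derivative_eq_intros simp: algebra_simps)
  have "continuous_on (UNIV \<times> UNIV \<times> U) (\<lambda>(r, s, v). a * s + r * \<phi> v)"
    "continuous_on (UNIV \<times> UNIV \<times> U) (\<lambda>(r, s, v). \<phi> v)"
    "continuous_on (UNIV \<times> UNIV \<times> U) (\<lambda>(r, s, v). a)"
    "continuous_on (UNIV \<times> UNIV \<times> U) (\<lambda>(r, s, v). r *\<^sub>R d\<phi> v)"
    unfolding case_prod_beta by (intro continuous_intros on_U c\<phi> cd\<phi>)+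
  from has_fderivs_local_functional[OF \<open>open U\<close> dL this adm hC]
  show "C\<rho> = (if Lint then (\<lambda>x. \<phi> (w x)) else (\<lambda>x. 0))"
    and "Cu = (if Lint then (\<lambda>x. a) else (\<lambda>x. 0))"
    and "Cw = (if Lint then (\<lambda>x. \<rho> x *\<^sub>R d\<phi> (w x)) else (\<lambda>x. 0))"
    unfolding Lint_def by simp_all
qed

lemma admissible_state_has_vector_derivative_compose:
  assumes "admissible_state U \<rho> u w" and "(f has_derivative f') (at (w x))"
  shows "((\<lambda>y. f (w y)) has_vector_derivative f' (dx_vec w x)) (at x)"
  using vector_derivative_diff_chain_within[OF admissible_state_has_vector_derivative[OF assms(1)]
      has_derivative_at_withinI[OF assms(2)]]
  by (simp add: o_def)

lemma pd_bracket_density_eq_integral: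
  fixes \<phi> :: "real^'n \<Rightarrow> real" and d\<phi> :: "real^'n \<Rightarrow> real^'n"
    and dd\<phi> :: "real^'n \<Rightarrow> real^'n \<Rightarrow> real^'n"
  assumes d\<phi>: "\<And>v. v \<in> U \<Longrightarrow> (d\<phi> has_derivative dd\<phi> v) (at v)"
    and flat: "\<And>v h. v \<in> U \<Longrightarrow> a *\<^sub>R h + dd\<phi> v h v* \<alpha> v + d\<phi> v v* \<beta> v h = 0"
    and adm: "admissible_state U \<rho> u w"
  shows "pd_bracket \<alpha> \<beta> \<rho> w (\<lambda>x. \<phi> (w x)) (\<lambda>x. a) (\<lambda>x. \<rho> x *\<^sub>R d\<phi> (w x)) F\<rho> Fu Fw
    = integral UNIV (\<lambda>x. - (d\<phi> (w x) \<bullet> dx_vec w x * Fu x + \<phi> (w x) * deriv Fu x))"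
proof -
  have wU: "w x \<in> U" and \<rho>: "\<rho> x \<noteq> 0" for x
    using adm unfolding admissible_state_def by auto
  have "((\<lambda>y. d\<phi> (w y) $ k) has_real_derivative dd\<phi> (w x) (dx_vec w x) $ k) (at x)" for k x
    using bounded_linear.has_vector_derivative[OF bounded_linear_vec_nth
        admissible_state_has_vector_derivative_compose[OF adm d\<phi>[OF wU]]]
    by (simp add: has_real_derivative_iff_has_vector_derivative)
  then have deriv_d\<phi>_w: "deriv (\<lambda>y. (\<rho> y *\<^sub>R d\<phi> (w y)) $ k / \<rho> y) x = dd\<phi> (w x) (dx_vec w x) $ k"
    for k x
    using \<rho> by (auto intro!: DERIV_imp_deriv)
  have "deriv (\<lambda>x. a) x * F\<rho> x - \<phi> (w x) * deriv Fu x
       + (\<Sum>k\<in>UNIV. deriv (\<lambda>y. w y $ k) x * (a * (Fw x $ k / \<rho> x) - ((\<rho> x *\<^sub>R d\<phi> (w x)) $ k / \<rho> x) * Fu x))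
       + (\<Sum>k\<in>UNIV. \<Sum>l\<in>UNIV. deriv (\<lambda>y. (\<rho> y *\<^sub>R d\<phi> (w y)) $ k / \<rho> y) x * (\<alpha> (w x) $ k $ l) * (Fw x $ l / \<rho> x))
       + (\<Sum>k\<in>UNIV. \<Sum>l\<in>UNIV. ((\<rho> x *\<^sub>R d\<phi> (w x)) $ k / \<rho> x) * (\<beta> (w x) (dx_vec w x) $ k $ l) * (Fw x $ l / \<rho> x))
     = - (d\<phi> (w x) \<bullet> dx_vec w x * Fu x + \<phi> (w x) * deriv Fu x)" for x
  proof -
    define b where "b = (\<chi> l. Fw x $ l / \<rho> x)"
    have "(\<Sum>k\<in>UNIV. deriv (\<lambda>y. w y $ k) x * (a * (Fw x $ k / \<rho> x) - ((\<rho> x *\<^sub>R d\<phi> (w x)) $ k / \<rho> x) * Fu x))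
        = a * (dx_vec w x \<bullet> b) - Fu x * (d\<phi> (w x) \<bullet> dx_vec w x)"
      using \<rho>[of x]
      by (simp add: b_def inner_vec_def dx_vec_def sum_distrib_left sum_subtractf algebra_simps)
    moreover have "(\<Sum>k\<in>UNIV. \<Sum>l\<in>UNIV. deriv (\<lambda>y. (\<rho> y *\<^sub>R d\<phi> (w y)) $ k / \<rho> y) x * (\<alpha> (w x) $ k $ l) * (Fw x $ l / \<rho> x))
        = (dd\<phi> (w x) (dx_vec w x) v* \<alpha> (w x)) \<bullet> b"
      unfolding deriv_d\<phi>_w b_def sum_sum_mult_eq_inner_vector_matrix[symmetric] by simp
    moreover have "(\<Sum>k\<in>UNIV. \<Sum>l\<in>UNIV. ((\<rho> x *\<^sub>R d\<phi> (w x)) $ k / \<rho> x) * (\<beta> (w x) (dx_vec w x) $ k $ l) * (Fw x $ l / \<rho> x))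
        = (d\<phi> (w x) v* \<beta> (w x) (dx_vec w x)) \<bullet> b"
      using \<rho>[of x] unfolding b_def sum_sum_mult_eq_inner_vector_matrix[symmetric] by simp
    moreover have "a * (dx_vec w x \<bullet> b) + (dd\<phi> (w x) (dx_vec w x) v* \<alpha> (w x)) \<bullet> b
        + (d\<phi> (w x) v* \<beta> (w x) (dx_vec w x)) \<bullet> b = 0"
      using arg_cong[OF flat[OF wU, of "dx_vec w x"], of "\<lambda>v. v \<bullet> b"]
      by (simp add: inner_add_left)
    ultimately show ?thesis
      by (simp add: algebra_simps)
  qed
  then show ?thesis
    unfolding pd_bracket_def by presburger
qed

lemma pd_bracket_density_eq_0:
  fixes \<phi> :: "real^'n \<Rightarrow> real" and d\<phi> :: "real^'n \<Rightarrow> real^'n"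
    and dd\<phi> :: "real^'n \<Rightarrow> real^'n \<Rightarrow> real^'n"
  assumes "0 \<in> U"
    and \<phi>: "\<And>v. v \<in> U \<Longrightarrow> (\<phi> has_derivative (\<lambda>h. d\<phi> v \<bullet> h)) (at v)"
    and d\<phi>: "\<And>v. v \<in> U \<Longrightarrow> (d\<phi> has_derivative dd\<phi> v) (at v)"
    and flat: "\<And>v h. v \<in> U \<Longrightarrow> a *\<^sub>R h + dd\<phi> v h v* \<alpha> v + d\<phi> v v* \<beta> v h = 0"
    and adm: "admissible_state U \<rho> u w"
    and Fu: "C1_fun Fu" "decays Fu"
  shows "pd_bracket \<alpha> \<beta> \<rho> w (\<lambda>x. \<phi> (w x)) (\<lambda>x. a) (\<lambda>x. \<rho> x *\<^sub>R d\<phi> (w x)) F\<rho> Fu Fw = 0"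
proof -
  have wU: "w x \<in> U" for x
    using adm unfolding admissible_state_def by auto
  have "integral UNIV (\<lambda>x. - (d\<phi> (w x) \<bullet> dx_vec w x * Fu x + \<phi> (w x) * deriv Fu x)) = 0"
  proof (rule integral_deriv_eq_0_at_infinity)
    show "((\<lambda>y. - (\<phi> (w y) * Fu y)) has_real_derivative
        - (d\<phi> (w x) \<bullet> dx_vec w x * Fu x + \<phi> (w x) * deriv Fu x)) (at x)" for x
    proof -
      have "((\<lambda>y. \<phi> (w y)) has_real_derivative d\<phi> (w x) \<bullet> dx_vec w x) (at x)"
        using admissible_state_has_vector_derivative_compose[OF adm \<phi>[OF wU]]
        by (simp add: has_real_derivative_iff_has_vector_derivative)
      moreover have "(Fu has_real_derivative deriv Fu x) (at x)"
        using Fu(1) by (simp add: C1_fun_def DERIV_deriv_iff_real_differentiable)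
      ultimately show ?thesis
        by (auto intro!: derivative_eq_intros simp: algebra_simps)
    qed
    have "isCont \<phi> 0"
      using \<phi>[OF \<open>0 \<in> U\<close>] by (rule has_derivative_continuous)
    then have "((\<lambda>y. - (\<phi> (w y) * Fu y)) \<longlongrightarrow> - (\<phi> 0 * 0)) at_infinity"
      using Fu(2) admissible_state_tendsto_0[OF adm] unfolding decays_def
      by (intro tendsto_intros isCont_tendsto_compose[where g=\<phi>])
    then show "((\<lambda>y. - (\<phi> (w y) * Fu y)) \<longlongrightarrow> 0) at_infinity"
      by simp
  qed
  then show ?thesis
    by (simp add: pd_bracket_density_eq_integral[OF d\<phi> flat adm])
qed

lemma is_casimir_density_functional:
  fixes \<phi> :: "real^'n \<Rightarrow> real" and d\<phi> :: "real^'n \<Rightarrow> real^'n"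
    and dd\<phi> :: "real^'n \<Rightarrow> real^'n \<Rightarrow> real^'n"
  assumes "open U" and "0 \<in> U"
    and \<phi>: "\<And>v. v \<in> U \<Longrightarrow> (\<phi> has_derivative (\<lambda>h. d\<phi> v \<bullet> h)) (at v)"
    and d\<phi>: "\<And>v. v \<in> U \<Longrightarrow> (d\<phi> has_derivative dd\<phi> v) (at v)"
    and flat: "\<And>v h. v \<in> U \<Longrightarrow> a *\<^sub>R h + dd\<phi> v h v* \<alpha> v + d\<phi> v v* \<beta> v h = 0"
  shows "is_casimir U \<alpha> \<beta> (\<lambda>\<rho> u w. integral UNIV (\<lambda>x. a * u x + \<rho> x * \<phi> (w x)))"
  unfolding is_casimir_def
proof (intro allI impI, elim conjE)
  fix \<rho> u w C\<rho> Cu Cw F F\<rho> Fu Fw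
  assume adm: "admissible_state U \<rho> u w"
    and hC: "has_fderivs (\<lambda>\<rho> u w. integral UNIV (\<lambda>x. a * u x + \<rho> x * \<phi> (w x))) \<rho> u w C\<rho> Cu Cw"
    and hF: "has_fderivs F \<rho> u w F\<rho> Fu Fw" and "decays Fu"
  have "continuous_on U d\<phi>"
    using d\<phi> by (intro has_derivative_continuous_on) (auto intro: has_derivative_at_withinI)
  note C = has_fderivs_density_functional[OF \<open>open U\<close> \<phi> this adm hC]
  have "C1_fun Fu"
    using hF unfolding has_fderivs_def by blast
  show "pd_bracket \<alpha> \<beta> \<rho> w C\<rho> Cu Cw F\<rho> Fu Fw = 0"
  proof (cases "(\<lambda>x. a * u x + \<rho> x * \<phi> (w x)) integrable_on UNIV")
    case True
    with C show ?thesis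
      using pd_bracket_density_eq_0[OF \<open>0 \<in> U\<close> \<phi> d\<phi> flat adm \<open>C1_fun Fu\<close> \<open>decays Fu\<close>] by simp
  next
    case False
    with C show ?thesis
      by (simp add: pd_bracket_zero_left)
  qed
qed

lemma flat_microscopic_connection_eq_0:
  assumes "local_coordinates U \<nu> J DJ" and "flat_microscopic U \<alpha> \<beta> J DJ g" and "v \<in> U"
  shows "DJ v h ** \<alpha> v + J v ** \<beta> v h = 0"
proof (rule invertible_mult_eq_0_cancel)
  show "invertible (transpose (J v))"
    using assms(1,3) unfolding local_coordinates_def by (blast intro: transpose_invertible)
  have "(A + B) ** C = A ** C + B ** C" for A B C :: "real^'a^'a"
    by (simp add: matrix_matrix_mult_def vec_eq_iff sum.distrib distrib_right)
  then show "(DJ v h ** \<alpha> v + J v ** \<beta> v h) ** transpose (J v) = 0"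
    using assms(2,3) unfolding flat_microscopic_def by (simp add: matrix_mul_assoc)
qed

lemma is_casimir_rho: "open U \<Longrightarrow> 0 \<in> U \<Longrightarrow> is_casimir U \<alpha> \<beta> casimir_rho"
  using is_casimir_density_functional[where a=0 and \<phi>="\<lambda>v. 1" and d\<phi>="\<lambda>v. 0" and dd\<phi>="\<lambda>v h. 0"]
  by (simp add: casimir_rho_def[abs_def])

lemma is_casimir_nu:
  assumes "open U" and "0 \<in> U" and "local_coordinates U \<nu> J DJ" and "flat_microscopic U \<alpha> \<beta> J DJ g"
  shows "is_casimir U \<alpha> \<beta> (casimir_nu \<nu> k)"
proof -
  have "((\<lambda>v. \<nu> v $ k) has_derivative (\<lambda>h. J v $ k \<bullet> h)) (at v)" if "v \<in> U" for v
  proof -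
    have "((\<lambda>v. \<nu> v $ k) has_derivative (\<lambda>h. (J v *v h) $ k)) (at v)"
      using assms(3) that unfolding local_coordinates_def
      by (blast intro: bounded_linear.has_derivative[OF bounded_linear_vec_nth])
    moreover have "(J v *v h) $ k = J v $ k \<bullet> h" for h
      by (simp add: matrix_vector_mult_def inner_vec_def)
    ultimately show ?thesis
      by simp
  qed
  moreover have "((\<lambda>v. J v $ k) has_derivative (\<lambda>h. DJ v h $ k)) (at v)" if "v \<in> U" for v
    using assms(3) that unfolding local_coordinates_def
    by (blast intro: bounded_linear.has_derivative[OF bounded_linear_vec_nth])
  moreover have "0 *\<^sub>R h + DJ v h $ k v* \<alpha> v + J v $ k v* \<beta> v h = 0" if "v \<in> U" for v h
    using arg_cong[OF flat_microscopic_connection_eq_0[OF assms(3,4) that, of h], of "\<lambda>M. M $ k"]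
    by (simp add: row_matrix_mult)
  ultimately have "is_casimir U \<alpha> \<beta> (\<lambda>\<rho> u w. integral UNIV (\<lambda>x. 0 * u x + \<rho> x * \<nu> (w x) $ k))"
    by (rule is_casimir_density_functional[OF assms(1,2)])
  then show ?thesis
    by (simp add: casimir_nu_def[abs_def])
qed

lemma is_casimir_u:
  assumes "open U" and "0 \<in> U" and pd: "pd_coefficients U \<alpha> \<beta>" and lc: "local_coordinates U \<nu> J DJ"
    and "transpose g = g" and "invertible g" and flat: "flat_microscopic U \<alpha> \<beta> J DJ g"
  shows "is_casimir U \<alpha> \<beta> (casimir_u \<nu> g)"
proof -
  define G where "G = matrix_inv g"
  have "transpose G = G"
    unfolding G_def using \<open>invertible g\<close> \<open>transpose g = g\<close> by (rule transpose_matrix_inv_symmetric)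
  define \<phi> where "\<phi> v = - (\<nu> v \<bullet> (G *v \<nu> v) / 2)" for v
  define d\<phi> where "d\<phi> v = - ((G *v \<nu> v) v* J v)" for v
  define dd\<phi> where "dd\<phi> v h = - ((G *v (J v *v h)) v* J v + (G *v \<nu> v) v* DJ v h)" for v h
  have \<nu>: "(\<nu> has_derivative (\<lambda>h. J v *v h)) (at v)" and J: "(J has_derivative DJ v) (at v)"
    and invJ: "invertible (J v)" and sym\<alpha>: "transpose (\<alpha> v) = \<alpha> v"
    and congruent: "J v ** \<alpha> v ** transpose (J v) = g"
    if "v \<in> U" for v
    using lc pd flat that unfolding local_coordinates_def pd_coefficients_def flat_microscopic_def by blast+
  have "(\<phi> has_derivative (\<lambda>h. d\<phi> v \<bullet> h)) (at v)" if "v \<in> U" for v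
    using has_derivative_minus[OF has_derivative_half_quadratic_form[OF \<open>transpose G = G\<close> \<nu>[OF that]]]
    by (simp add: \<phi>_def[abs_def] d\<phi>_def dot_lmul_matrix)
  moreover have "(d\<phi> has_derivative dd\<phi> v) (at v)" if "v \<in> U" for v
    unfolding d\<phi>_def[abs_def] dd\<phi>_def[abs_def]
    using bounded_bilinear.FDERIV[OF bounded_bilinear_vector_matrix_mult
        bounded_linear.has_derivative[OF matrix_vector_mul_bounded_linear[of G] \<nu>[OF that]] J[OF that]]
    by (auto intro: derivative_eq_intros simp: add.commute)
  moreover have "1 *\<^sub>R h + dd\<phi> v h v* \<alpha> v + d\<phi> v v* \<beta> v h = 0" if "v \<in> U" for v h
    unfolding dd\<phi>_def d\<phi>_def G_def scaleR_one
    using sym\<alpha>[OF that] invJ[OF that] \<open>invertible g\<close> congruent[OF that]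
      flat_microscopic_connection_eq_0[OF lc flat that]
    by (rule flat_half_quadratic_form_identity)
  ultimately have "is_casimir U \<alpha> \<beta> (\<lambda>\<rho> u w. integral UNIV (\<lambda>x. 1 * u x + \<rho> x * \<phi> (w x)))"
    by (rule is_casimir_density_functional[OF \<open>open U\<close> \<open>0 \<in> U\<close>])
  moreover have "casimir_u \<nu> g = (\<lambda>\<rho> u w. integral UNIV (\<lambda>x. 1 * u x + \<rho> x * \<phi> (w x)))"
    by (simp add: fun_eq_iff casimir_u_def \<phi>_def G_def)
  ultimately show ?thesis
    by simp
qed

theorem lemma2:
  fixes \<alpha> :: "real^'n \<Rightarrow> real^'n^'n"
    and \<beta> :: "real^'n \<Rightarrow> real^'n \<Rightarrow> real^'n^'n"
    and U :: "(real^'n) set"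
    and \<nu> :: "real^'n \<Rightarrow> real^'n"
    and J :: "real^'n \<Rightarrow> real^'n^'n"
    and DJ :: "real^'n \<Rightarrow> real^'n \<Rightarrow> real^'n^'n"
    and g :: "real^'n^'n"
  assumes "open U" and "0 \<in> U"
    and "pd_coefficients U \<alpha> \<beta>"
    and "nondegenerate U \<alpha>"
    and "local_coordinates U \<nu> J DJ"
    and "transpose g = g" and "invertible g"
    and "flat_microscopic U \<alpha> \<beta> J DJ g"
  shows "is_casimir U \<alpha> \<beta> casimir_rho
       \<and> (\<forall>k. is_casimir U \<alpha> \<beta> (casimir_nu \<nu> k))
       \<and> is_casimir U \<alpha> \<beta> (casimir_u \<nu> g)"
  using is_casimir_rho[OF assms(1,2)] is_casimir_nu[OF assms(1,2,5,8)]
    is_casimir_u[OF assms(1,2,3,5,6,7,8)]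
  by blast

end
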